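(* For any pair of jointly distributed finite-valued random variables $(X,Y)\sim p_{XY}$: (a) $\tilde C_W(Y\backslash X)=H(Q_Y^X)$; (b) $\tilde P_W(Y\backslash X)=H(Y|Q_Y^X)$; (c) $H(Y)=\tilde C_W(Y\backslash X)+\tilde P_W(Y\backslash X)=H(Q_Y^X)+H(Y|Q_Y^X)$; (d) $C_W(X;Y)\leq \tilde C_W(Y\backslash X)$.
   Context: For finite-valued random variables, $A-B-C$ means that $A$ and $C$ are conditionally independent given $B$. Optimizations below are over finite-valued random variables $Q$ jointly distributed with $(X,Y)$ (marginal of $(X,Y)$ fixed). Define $\tilde P_W(Y\backslash X)=\max\{H(Y|Q): X-Q-Y \text{ and } X-Y-Q\}$, $\tilde C_W(Y\backslash X)=\min\{H(Q): X-Q-Y \text{ and } X-Y-Q\}$, and Wyner's common information $C_W(X;Y)=\min\{I(XY;Q): X-Q-Y\}$, where $XY$ denotes the joint variable $(X,Y)$. Let $Q_Y^X=f(Y)$ with $f(y)=p_{X|Y}(\cdot|y)$ (a distribution on the alphabet of $X$), i.e. $Q_Y^X$ identifies values of $Y$ inducing the same conditional distribution of $X$. *)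

theory Defs
  imports "HOL-Probability.Probability"
begin

definition ent :: "'a pmf \<Rightarrow> real" where
  "ent P = - (\<Sum>a\<in>set_pmf P. pmf P a * log 2 (pmf P a))"

definition cond_ent :: "('a \<times> 'b) pmf \<Rightarrow> real" where
  "cond_ent P = ent P - ent (map_pmf snd P)"

definition mut_info :: "('a \<times> 'b) pmf \<Rightarrow> real" where
  "mut_info P = ent (map_pmf fst P) + ent (map_pmf snd P) - ent P"

(* A - B - C : A and C conditionally independent given B,
   for a joint distribution of (A,B,C) *)
definition markov :: "('a \<times> 'b \<times> 'c) pmf \<Rightarrow> bool" where
  "markov P \<longleftrightarrow> (\<forall>a b c.
     pmf P (a, b, c) * pmf (map_pmf (\<lambda>(a,b,c). b) P) b =
     pmf (map_pmf (\<lambda>(a,b,c). (a,b)) P) (a, b) * pmf (map_pmf (\<lambda>(a,b,c). (b,c)) P) (b, c))"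

(* joint distributions of (X,Y,Q) with Q finite-valued (alphabet embedded in nat)
   and (X,Y)-marginal equal to p *)
definition couplings :: "('x \<times> 'y) pmf \<Rightarrow> ('x \<times> 'y \<times> nat) pmf set" where
  "couplings p = {r. finite (set_pmf r) \<and> map_pmf (\<lambda>(x,y,q). (x,y)) r = p}"

definition XQY :: "('x \<times> 'y \<times> nat) pmf \<Rightarrow> ('x \<times> nat \<times> 'y) pmf" where
  "XQY r = map_pmf (\<lambda>(x,y,q). (x,q,y)) r"

(* \tilde P_W(Y\X) = max { H(Y|Q) : X-Q-Y and X-Y-Q } *)
definition tilde_PW :: "('x \<times> 'y) pmf \<Rightarrow> real" where
  "tilde_PW p = Sup {cond_ent (map_pmf (\<lambda>(x,y,q). (y,q)) r) | r.
      r \<in> couplings p \<and> markov (XQY r) \<and> markov r}"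

(* \tilde C_W(Y\X) = min { H(Q) : X-Q-Y and X-Y-Q } *)
definition tilde_CW :: "('x \<times> 'y) pmf \<Rightarrow> real" where
  "tilde_CW p = Inf {ent (map_pmf (\<lambda>(x,y,q). q) r) | r.
      r \<in> couplings p \<and> markov (XQY r) \<and> markov r}"

(* Wyner's common information C_W(X;Y) = min { I(XY;Q) : X-Q-Y } *)
definition wyner_CW :: "('x \<times> 'y) pmf \<Rightarrow> real" where
  "wyner_CW p = Inf {mut_info (map_pmf (\<lambda>(x,y,q). ((x,y),q)) r) | r.
      r \<in> couplings p \<and> markov (XQY r)}"

(* f(y) = p_{X|Y}(.|y) *)
definition condX :: "('x \<times> 'y) pmf \<Rightarrow> 'y \<Rightarrow> ('x \<Rightarrow> real)" where
  "condX p y = (\<lambda>x. pmf p (x, y) / pmf (map_pmf snd p) y)"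

(* distribution of Q_Y^X = f(Y) *)
definition QYX :: "('x \<times> 'y) pmf \<Rightarrow> ('x \<Rightarrow> real) pmf" where
  "QYX p = map_pmf (\<lambda>(x,y). condX p y) p"

definition Y_QYX :: "('x \<times> 'y) pmf \<Rightarrow> ('y \<times> ('x \<Rightarrow> real)) pmf" where
  "Y_QYX p = map_pmf (\<lambda>(x,y). (y, condX p y)) p"

end

theory Submission
  imports Defs
begin

text \<open>If X - Q - Y and X - Y - Q both hold, then for every (x, y, q) in the support both chains
  factor p(x, y, q) through p(y, q), so p(x|y) = p(x, y, q) / p(y, q) = p(x|q): the variable Q
  determines f(Y) = Q_Y^X. Hence H(Q) \<ge> H(Q_Y^X), and H(Y|Q) \<le> H(Y|Q_Y^X) because conditioning
  on a function of Q can only increase conditional entropy. Conversely Q := Q_Y^X (encoded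
  injectively in the naturals) satisfies both chains, since Y carries no information about X beyond
  f(Y), and attains both bounds. Being a function of Y it splits H(Y) as in (c), and being a
  function of (X, Y) it has I(XY; Q) = H(Q), which gives (d).\<close>

lemma pmf_map_pmf_eq_sum:
  assumes "finite S" and "\<And>a. a \<in> set_pmf P \<Longrightarrow> f a = b \<longleftrightarrow> a \<in> S"
  shows "pmf (map_pmf f P) b = sum (pmf P) S"
proof -
  have "f -` {b} \<inter> set_pmf P = S \<inter> set_pmf P"
    using assms(2) by auto
  then have "pmf (map_pmf f P) b = measure_pmf.prob P S"
    by (metis pmf_map measure_Int_set_pmf)
  then show ?thesis
    using assms(1) by (simp add: measure_measure_pmf_finite)
qed

lemma sum_set_pmf_map_pmf:
  assumes "finite (set_pmf P)"
  shows "(\<Sum>b\<in>set_pmf (map_pmf f P). h b * pmf (map_pmf f P) b) = (\<Sum>a\<in>set_pmf P. h (f a) * pmf P a)"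
proof -
  have "(\<Sum>b\<in>set_pmf (map_pmf f P). h b * pmf (map_pmf f P) b) = measure_pmf.expectation (map_pmf f P) h"
    using assms by (intro integral_measure_pmf_real[symmetric]) auto
  also have "\<dots> = measure_pmf.expectation P (\<lambda>a. h (f a))"
    by simp
  also have "\<dots> = (\<Sum>a\<in>set_pmf P. h (f a) * pmf P a)"
    using assms by (intro integral_measure_pmf_real) auto
  finally show ?thesis .
qed

lemma ent_map_pmf:
  assumes "finite (set_pmf P)"
  shows "ent (map_pmf f P) = - (\<Sum>a\<in>set_pmf P. pmf P a * log 2 (pmf (map_pmf f P) (f a)))"
  using sum_set_pmf_map_pmf[OF assms, of "\<lambda>b. log 2 (pmf (map_pmf f P) b)" f]
  by (simp add: ent_def mult.commute)

lemma pmf_le_pmf_map_pmf: "pmf P a \<le> pmf (map_pmf f P) (f a)"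
proof -
  have "measure_pmf.prob P {a} \<le> measure_pmf.prob P (f -` {f a})"
    by (rule measure_pmf.finite_measure_mono) auto
  then show ?thesis
    by (simp add: measure_pmf_single pmf_map)
qed

lemma pmf_map_pmf_pos: "a \<in> set_pmf P \<Longrightarrow> 0 < pmf (map_pmf f P) (f a)"
  using pmf_le_pmf_map_pmf[of P a f] pmf_positive[of a P] by linarith

lemma ent_map_pmf_le:
  assumes fin: "finite (set_pmf P)"
  shows "ent (map_pmf f P) \<le> ent P"
  unfolding ent_map_pmf[OF fin] ent_def[of P] neg_le_iff_le
proof (rule sum_mono)
  fix a assume "a \<in> set_pmf P"
  then have "0 < pmf P a"
    by (rule pmf_positive)
  then show "pmf P a * log 2 (pmf P a) \<le> pmf P a * log 2 (pmf (map_pmf f P) (f a))"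
    using pmf_le_pmf_map_pmf[of P a f] by (intro mult_left_mono) auto
qed

lemma ent_map_pmf_inj:
  assumes "finite (set_pmf P)" and "inj_on f (set_pmf P)"
  shows "ent (map_pmf f P) = ent P"
  unfolding ent_map_pmf[OF assms(1)] ent_def[of P] using assms(2) by (simp add: pmf_map_inj)

lemma gibbs_inequality:
  assumes fin: "finite (set_pmf P)" and pos: "\<And>a. a \<in> set_pmf P \<Longrightarrow> 0 < w a"
    and total: "(\<Sum>a\<in>set_pmf P. w a) \<le> 1"
  shows "ent P \<le> - (\<Sum>a\<in>set_pmf P. pmf P a * log 2 (w a))"
proof -
  have "ent P + (\<Sum>a\<in>set_pmf P. pmf P a * log 2 (w a))
      = (\<Sum>a\<in>set_pmf P. pmf P a * ln (w a / pmf P a)) / ln 2"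
    unfolding ent_def sum_divide_distrib sum_negf[symmetric] sum.distrib[symmetric]
  proof (rule sum.cong)
    fix a assume "a \<in> set_pmf P"
    then have "ln (w a / pmf P a) = ln (w a) - ln (pmf P a)"
      using pos pmf_positive by (intro ln_divide_pos) auto
    then show "- (pmf P a * log 2 (pmf P a)) + pmf P a * log 2 (w a) = pmf P a * ln (w a / pmf P a) / ln 2"
      by (simp add: log_def field_simps flip: distrib_left)
  qed simp
  also have "\<dots> \<le> (\<Sum>a\<in>set_pmf P. pmf P a * (w a / pmf P a - 1)) / ln 2"
    using pos pmf_positive
    by (intro divide_right_mono sum_mono mult_left_mono ln_le_minus_one divide_pos_pos) auto
  also have "\<dots> = ((\<Sum>a\<in>set_pmf P. w a) - (\<Sum>a\<in>set_pmf P. pmf P a)) / ln 2"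
    unfolding sum_subtractf[symmetric]
    by (intro arg_cong[where f = "\<lambda>x. x / ln 2"] sum.cong) (auto simp: field_simps set_pmf_iff)
  also have "\<dots> \<le> 0"
    using total fin by (simp add: sum_pmf_eq_1 divide_nonpos_pos)
  finally show ?thesis
    by linarith
qed

lemma sum_pmf_fst_eq_pmf_map_snd:
  assumes "finite A" and "fst ` set_pmf P \<subseteq> A"
  shows "(\<Sum>a\<in>A. pmf P (a, c)) = pmf (map_pmf snd P) c"
proof -
  have "pmf (map_pmf snd P) c = sum (pmf P) ((\<lambda>a. (a, c)) ` A)"
    using assms by (intro pmf_map_pmf_eq_sum) force+
  also have "\<dots> = (\<Sum>a\<in>A. pmf P (a, c))"
    by (simp add: sum.reindex inj_on_def)
  finally show ?thesis ..
qed

lemma cond_ent_le_cond_ent_map_snd: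
  fixes P :: "('a \<times> 'b) pmf" and g :: "'b \<Rightarrow> 'c"
  assumes fin: "finite (set_pmf P)"
  shows "cond_ent P \<le> cond_ent (map_pmf (map_prod id g) P)"
proof -
  define B where "B = map_pmf snd P"
  define C where "C = map_pmf (map_prod id g) P"
  define G where "G = map_pmf (g \<circ> snd) P"
  \<comment> \<open>the law in which A depends on B only through g B\<close>
  define w where "w t = pmf B (snd t) * pmf C (fst t, g (snd t)) / pmf G (g (snd t))" for t
  have finB: "finite (set_pmf B)" and finC: "finite (set_pmf C)"
    using fin by (simp_all add: B_def C_def)
  have C_snd: "map_pmf snd C = G" and B_G: "map_pmf g B = G"
    by (simp_all add: B_def C_def G_def pmf.map_comp comp_def)
  have pos: "0 < pmf B (snd t)" "0 < pmf C (fst t, g (snd t))" "0 < pmf G (g (snd t))"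
    if "t \<in> set_pmf P" for t
    using pmf_map_pmf_pos[OF that, of snd] pmf_map_pmf_pos[OF that, of "map_prod id g"]
      pmf_map_pmf_pos[OF that, of "g \<circ> snd"]
    by (simp_all add: B_def C_def G_def map_prod_def split_beta)
  have "ent P \<le> - (\<Sum>t\<in>set_pmf P. pmf P t * log 2 (w t))"
  proof (rule gibbs_inequality[OF fin])
    show "0 < w t" if "t \<in> set_pmf P" for t
      using pos[OF that] by (simp add: w_def)
    have "(\<Sum>t\<in>set_pmf P. w t) \<le> (\<Sum>t\<in>fst ` set_pmf C \<times> set_pmf B. w t)"
      using finB finC by (intro sum_mono2) (force simp: B_def C_def w_def)+
    also have "\<dots> = (\<Sum>b\<in>set_pmf B. \<Sum>a\<in>fst ` set_pmf C. w (a, b))"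
      by (subst sum.swap) (simp add: sum.cartesian_product)
    also have "\<dots> = (\<Sum>b\<in>set_pmf B. pmf B b / pmf G (g b) * (\<Sum>a\<in>fst ` set_pmf C. pmf C (a, g b)))"
      unfolding sum_distrib_left by (simp add: w_def)
    also have "\<dots> = (\<Sum>b\<in>set_pmf B. pmf B b)"
    proof (rule sum.cong)
      fix b assume "b \<in> set_pmf B"
      then have "0 < pmf G (g b)"
        unfolding B_G[symmetric] by (rule pmf_map_pmf_pos)
      then show "pmf B b / pmf G (g b) * (\<Sum>a\<in>fst ` set_pmf C. pmf C (a, g b)) = pmf B b"
        using finC by (simp add: sum_pmf_fst_eq_pmf_map_snd C_snd)
    qed simp
    also have "\<dots> = 1"
      using finB by (rule sum_pmf_eq_1) simp
    finally show "(\<Sum>t\<in>set_pmf P. w t) \<le> 1" .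
  qed
  also have "- (\<Sum>t\<in>set_pmf P. pmf P t * log 2 (w t)) = ent B + ent C - ent G"
    unfolding B_def C_def G_def ent_map_pmf[OF fin]
    unfolding sum_negf[symmetric] sum_subtractf[symmetric] sum.distrib[symmetric]
      B_def[symmetric] C_def[symmetric] G_def[symmetric]
  proof (rule sum.cong)
    fix t assume "t \<in> set_pmf P"
    from pos[OF this] show "- (pmf P t * log 2 (w t)) = - (pmf P t * log 2 (pmf B (snd t)))
        + - (pmf P t * log 2 (pmf C (map_prod id g t))) - - (pmf P t * log 2 (pmf G ((g \<circ> snd) t)))"
      by (simp add: w_def log_mult log_divide algebra_simps map_prod_def split_beta)
  qed simp
  finally show ?thesis
    by (simp add: cond_ent_def C_snd flip: B_def C_def)
qed

lemma ent_return_pmf: "ent (return_pmf c) = 0"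
  by (simp add: ent_def)

lemma cond_ent_map_snd_inj:
  assumes fin: "finite (set_pmf P)" and inj: "inj_on g (snd ` set_pmf P)"
  shows "cond_ent (map_pmf (map_prod id g) P) = cond_ent P"
proof -
  have "inj_on (map_prod id g) (set_pmf P)"
    using inj by (auto simp: inj_on_def)
  with fin have "ent (map_pmf (map_prod id g) P) = ent P"
    by (rule ent_map_pmf_inj)
  moreover have "ent (map_pmf g (map_pmf snd P)) = ent (map_pmf snd P)"
    using fin inj by (intro ent_map_pmf_inj) auto
  ultimately show ?thesis
    by (simp add: cond_ent_def pmf.map_comp comp_def)
qed

lemma mut_info_nonneg:
  assumes fin: "finite (set_pmf P)"
  shows "0 \<le> mut_info P"
  \<comment> \<open>H(A|B) \<le> H(A|g B) for a constant g\<close>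
proof -
  have "ent (map_pmf (map_prod id (\<lambda>_. ())) P) = ent (map_pmf (\<lambda>a. (a, ())) (map_pmf fst P))"
    by (simp add: pmf.map_comp comp_def map_prod_def case_prod_unfold)
  also have "\<dots> = ent (map_pmf fst P)"
    using fin by (intro ent_map_pmf_inj) (auto simp: inj_on_def)
  finally have "cond_ent (map_pmf (map_prod id (\<lambda>_. ())) P) = ent (map_pmf fst P)"
    by (simp add: cond_ent_def pmf.map_comp comp_def ent_return_pmf)
  then show ?thesis
    using cond_ent_le_cond_ent_map_snd[OF fin, of "\<lambda>_. ()"] by (simp add: cond_ent_def mut_info_def)
qed

lemma mut_info_map_graph:
  assumes fin: "finite (set_pmf P)"
  shows "mut_info (map_pmf (\<lambda>z. (z, k z)) P) = ent (map_pmf k P)"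
  using ent_map_pmf_inj[OF fin, of "\<lambda>z. (z, k z)"]
  by (simp add: mut_info_def pmf.map_comp comp_def inj_on_def)

lemma pmf_map_pmf_left_inverse:
  assumes "\<And>z. g (f z) = z"
  shows "pmf (map_pmf f M) y = (if f (g y) = y then pmf M (g y) else 0)"
proof (cases "f (g y) = y")
  case True
  have "inj f"
    by (metis assms injI)
  then show ?thesis
    using True pmf_map_inj'[of f M "g y"] by simp
next
  case False
  then have "y \<notin> f ` set_pmf M"
    using assms by auto
  then show ?thesis
    using False by (simp add: pmf_map_outside)
qed

lemma markov_XQY_iff:
  "markov (XQY r) \<longleftrightarrow> (\<forall>a b c.
     pmf r (a, b, c) * pmf (map_pmf (\<lambda>(a,b,c). c) r) c =
     pmf (map_pmf (\<lambda>(a,b,c). (a,c)) r) (a, c) * pmf (map_pmf (\<lambda>(a,b,c). (b,c)) r) (b, c))"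
proof -
  have "pmf (XQY r) (a, c, b) = pmf r (a, b, c)" for a b c
    unfolding XQY_def by (subst pmf_map_pmf_left_inverse[where g = "\<lambda>(a,c,b). (a,b,c)"]) auto
  moreover have "pmf (map_pmf (\<lambda>(a,b,c). (b,c)) (XQY r)) (c, b) = pmf (map_pmf (\<lambda>(a,b,c). (b,c)) r) (b, c)"
    for b c
  proof -
    have "map_pmf (\<lambda>(a,b,c). (b,c)) (XQY r) = map_pmf prod.swap (map_pmf (\<lambda>(a,b,c). (b,c)) r)"
      by (simp add: XQY_def pmf.map_comp comp_def case_prod_unfold prod.swap_def)
    then show ?thesis
      using pmf_map_inj'[of prod.swap _ "(b, c)"] by simp
  qed
  moreover have "map_pmf (\<lambda>(a,b,c). b) (XQY r) = map_pmf (\<lambda>(a,b,c). c) r"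
    and "map_pmf (\<lambda>(a,b,c). (a,b)) (XQY r) = map_pmf (\<lambda>(a,b,c). (a,c)) r"
    by (simp_all add: XQY_def pmf.map_comp comp_def case_prod_unfold)
  ultimately show ?thesis
    unfolding markov_def by auto
qed

lemma condX_eq_of_markov:
  assumes XQY: "markov (XQY r)" and XYQ: "markov r" and xyq: "(x, y, q) \<in> set_pmf r"
  shows "condX (map_pmf (\<lambda>(x,y,q). (x,y)) r) y = condX (map_pmf (\<lambda>(x,y,q). (x,q)) r) q"
proof
  fix a
  let ?D = "pmf r (a, y, q)"
  let ?YQ = "pmf (map_pmf (\<lambda>(a,b,c). (b,c)) r) (y, q)"
  have "0 < ?YQ"
    using pmf_map_pmf_pos[OF xyq, of "\<lambda>(a,b,c). (b,c)"] by simp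
  moreover have "0 < pmf (map_pmf (\<lambda>(a,b,c). b) r) y" and "0 < pmf (map_pmf (\<lambda>(a,b,c). c) r) q"
    using pmf_map_pmf_pos[OF xyq, of "\<lambda>(a,b,c). b"] pmf_map_pmf_pos[OF xyq, of "\<lambda>(a,b,c). c"] by simp_all
  moreover have "?D * pmf (map_pmf (\<lambda>(a,b,c). b) r) y = pmf (map_pmf (\<lambda>(a,b,c). (a,b)) r) (a, y) * ?YQ"
    using XYQ unfolding markov_def by blast
  moreover have "?D * pmf (map_pmf (\<lambda>(a,b,c). c) r) q = pmf (map_pmf (\<lambda>(a,b,c). (a,c)) r) (a, q) * ?YQ"
    using XQY unfolding markov_XQY_iff by blast
  ultimately have "pmf (map_pmf (\<lambda>(a,b,c). (a,b)) r) (a, y) / pmf (map_pmf (\<lambda>(a,b,c). b) r) y = ?D / ?YQ"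
    and "pmf (map_pmf (\<lambda>(a,b,c). (a,c)) r) (a, q) / pmf (map_pmf (\<lambda>(a,b,c). c) r) q = ?D / ?YQ"
    by (simp_all add: field_simps)
  then show "condX (map_pmf (\<lambda>(x,y,q). (x,y)) r) y a = condX (map_pmf (\<lambda>(x,y,q). (x,q)) r) q a"
    by (simp add: condX_def pmf.map_comp comp_def case_prod_unfold)
qed

lemma
  assumes r: "r \<in> couplings p" and XQY: "markov (XQY r)" and XYQ: "markov r"
  defines "g \<equiv> condX (map_pmf (\<lambda>(x,y,q). (x,q)) r)"
  shows QYX_eq_map_of_markov: "QYX p = map_pmf g (map_pmf (\<lambda>(x,y,q). q) r)"
    and Y_QYX_eq_map_of_markov:
      "Y_QYX p = map_pmf (map_prod id g) (map_pmf (\<lambda>(x,y,q). (y,q)) r)"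
proof -
  have p: "map_pmf (\<lambda>(x,y,q). (x,y)) r = p"
    using r by (simp add: couplings_def)
  have "condX (map_pmf (\<lambda>(x,y,q). (x,y)) r) y = g q" if "(x, y, q) \<in> set_pmf r" for x y q
    unfolding g_def using XQY XYQ that by (rule condX_eq_of_markov)
  then show "QYX p = map_pmf g (map_pmf (\<lambda>(x,y,q). q) r)"
    and "Y_QYX p = map_pmf (map_prod id g) (map_pmf (\<lambda>(x,y,q). (y,q)) r)"
    unfolding QYX_def Y_QYX_def p[symmetric] pmf.map_comp
    by (auto simp: comp_def intro!: pmf.map_cong)
qed

lemma ent_QYX_le:
  assumes "r \<in> couplings p" and "markov (XQY r)" and "markov r"
  shows "ent (QYX p) \<le> ent (map_pmf (\<lambda>(x,y,q). q) r)"
  using assms by (simp add: QYX_eq_map_of_markov couplings_def ent_map_pmf_le)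

lemma cond_ent_le_Y_QYX:
  assumes "r \<in> couplings p" and "markov (XQY r)" and "markov r"
  shows "cond_ent (map_pmf (\<lambda>(x,y,q). (y,q)) r) \<le> cond_ent (Y_QYX p)"
  using assms by (simp add: Y_QYX_eq_map_of_markov couplings_def cond_ent_le_cond_ent_map_snd)

lemma markov_map_graph: "markov (map_pmf (\<lambda>(a,b). (a, b, k b)) P)"
proof -
  have "pmf (map_pmf (\<lambda>(a,b). (a, b, k b)) P) (a, b, c) = (if c = k b then pmf P (a, b) else 0)"
    for a b c by (subst pmf_map_pmf_left_inverse[where g = "\<lambda>(a,b,c). (a,b)"]) auto
  moreover have "pmf (map_pmf (\<lambda>b. (b, k b)) (map_pmf snd P)) (b, c)
      = (if c = k b then pmf (map_pmf snd P) b else 0)" for b c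
    by (subst pmf_map_pmf_left_inverse[where g = fst]) auto
  ultimately show ?thesis
    unfolding markov_def by (simp add: pmf.map_comp comp_def case_prod_unfold)
qed

lemma markov_map_through_function:
  assumes fin: "finite (set_pmf p)"
    and fibres: "\<And>y y'. y \<in> snd ` set_pmf p \<Longrightarrow> y' \<in> snd ` set_pmf p \<Longrightarrow> h y = h y'
      \<Longrightarrow> condX p y = condX p y'"
  shows "markov (map_pmf (\<lambda>(x,y). (x, h y, y)) p)"
proof -
  let ?Y = "map_pmf snd p"
  have factor: "pmf p (a, y) * pmf (map_pmf h ?Y) (h y) = pmf (map_pmf (map_prod id h) p) (a, h y) * pmf ?Y y"
    for a y
  proof (cases "y \<in> snd ` set_pmf p")
    case False
    then have "(a, y) \<notin> set_pmf p"
      by force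
    with False show ?thesis
      by (simp add: pmf_map_outside set_pmf_iff)
  next
    case True
    define Yq where "Yq = {y' \<in> snd ` set_pmf p. h y' = h y}"
    have finYq: "finite Yq"
      using fin by (simp add: Yq_def)
    have cond: "pmf p (a, y') = condX p y a * pmf ?Y y'" if "y' \<in> Yq" for y'
    proof -
      have y': "y' \<in> snd ` set_pmf p" "h y' = h y"
        using that by (auto simp: Yq_def)
      then have "pmf ?Y y' \<noteq> 0"
        by (simp flip: set_pmf_iff)
      moreover have "condX p y' = condX p y"
        using fibres[OF y'(1) True y'(2)] .
      ultimately show ?thesis
        by (metis condX_def nonzero_eq_divide_eq)
    qed
    have "pmf (map_pmf (map_prod id h) p) (a, h y) = sum (pmf p) (Pair a ` Yq)"
      using finYq by (intro pmf_map_pmf_eq_sum) (force simp: Yq_def)+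
    also have "\<dots> = (\<Sum>y'\<in>Yq. condX p y a * pmf ?Y y')"
      by (simp add: sum.reindex inj_on_def cond)
    also have "\<dots> = condX p y a * sum (pmf ?Y) Yq"
      by (simp add: sum_distrib_left)
    also have "sum (pmf ?Y) Yq = pmf (map_pmf h ?Y) (h y)"
      by (rule pmf_map_pmf_eq_sum[OF finYq, symmetric]) (auto simp: Yq_def)
    finally have "pmf (map_pmf (map_prod id h) p) (a, h y) = condX p y a * pmf (map_pmf h ?Y) (h y)" .
    moreover have "pmf p (a, y) = condX p y a * pmf ?Y y"
      using True by (intro cond) (simp add: Yq_def)
    ultimately show ?thesis
      by (simp only:) (simp add: mult_ac)
  qed
  have "pmf (map_pmf (\<lambda>(x,y). (x, h y, y)) p) (a, q, y) = (if q = h y then pmf p (a, y) else 0)"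
    for a q y by (subst pmf_map_pmf_left_inverse[where g = "\<lambda>(a,q,y). (a,y)"]) auto
  moreover have "pmf (map_pmf (\<lambda>y. (h y, y)) ?Y) (q, y) = (if q = h y then pmf ?Y y else 0)" for q y
    by (subst pmf_map_pmf_left_inverse[where g = snd]) auto
  ultimately show ?thesis
    unfolding markov_def using factor by (simp add: pmf.map_comp comp_def case_prod_unfold map_prod_def)
qed

lemma exists_coupling_through_QYX:
  assumes fin: "finite (set_pmf p)"
  obtains r where "r \<in> couplings p" and "markov (XQY r)" and "markov r"
    and "ent (map_pmf (\<lambda>(x,y,q). q) r) = ent (QYX p)"
    and "cond_ent (map_pmf (\<lambda>(x,y,q). (y,q)) r) = cond_ent (Y_QYX p)"
    and "mut_info (map_pmf (\<lambda>(x,y,q). ((x,y),q)) r) = ent (QYX p)"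
proof -
  have "finite (condX p ` snd ` set_pmf p)"
    using fin by simp
  then obtain e :: "_ \<Rightarrow> nat" where e: "inj_on e (condX p ` snd ` set_pmf p)"
    by (metis finite_imp_inj_to_nat_seg)
  have set_QYX: "set_pmf (QYX p) = condX p ` snd ` set_pmf p"
    by (simp add: QYX_def image_image case_prod_unfold)
  \<comment> \<open>Q := e (f Y), as the alphabet of Q in \<open>couplings\<close> is nat\<close>
  define r where "r = map_pmf (\<lambda>(x,y). (x, y, e (condX p y))) p"
  have Q: "map_pmf (\<lambda>(x,y,q). q) r = map_pmf e (QYX p)"
    by (simp add: r_def QYX_def pmf.map_comp comp_def case_prod_unfold)
  have ent_Q: "ent (map_pmf e (QYX p)) = ent (QYX p)"
    using fin e by (intro ent_map_pmf_inj) (simp_all add: set_QYX)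
  show ?thesis
  proof (rule that)
    show "r \<in> couplings p"
      using fin by (simp add: couplings_def r_def pmf.map_comp comp_def case_prod_unfold)
    show "markov r"
      unfolding r_def by (rule markov_map_graph)
    have "XQY r = map_pmf (\<lambda>(x,y). (x, e (condX p y), y)) p"
      by (simp add: XQY_def r_def pmf.map_comp comp_def case_prod_unfold)
    also have "markov \<dots>"
      using fin by (rule markov_map_through_function) (rule inj_onD[OF e]; blast)
    finally show "markov (XQY r)" .
    show "ent (map_pmf (\<lambda>(x,y,q). q) r) = ent (QYX p)"
      unfolding Q by (rule ent_Q)
    have "map_pmf (\<lambda>(x,y,q). (y,q)) r = map_pmf (map_prod id e) (Y_QYX p)"
      by (simp add: r_def Y_QYX_def pmf.map_comp comp_def case_prod_unfold)
    also have "cond_ent \<dots> = cond_ent (Y_QYX p)"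
      using fin e by (intro cond_ent_map_snd_inj) (simp_all add: Y_QYX_def image_image case_prod_unfold)
    finally show "cond_ent (map_pmf (\<lambda>(x,y,q). (y,q)) r) = cond_ent (Y_QYX p)" .
    have "map_pmf (\<lambda>(x,y,q). ((x,y),q)) r = map_pmf (\<lambda>z. (z, e (condX p (snd z)))) p"
      by (simp add: r_def pmf.map_comp comp_def case_prod_unfold)
    also have "mut_info \<dots> = ent (map_pmf (\<lambda>z. e (condX p (snd z))) p)"
      using fin by (rule mut_info_map_graph)
    also have "map_pmf (\<lambda>z. e (condX p (snd z))) p = map_pmf e (QYX p)"
      by (simp add: QYX_def pmf.map_comp comp_def case_prod_unfold)
    finally show "mut_info (map_pmf (\<lambda>(x,y,q). ((x,y),q)) r) = ent (QYX p)"
      unfolding ent_Q .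
  qed
qed

lemma ent_snd_eq_ent_QYX_add_cond_ent:
  assumes fin: "finite (set_pmf p)"
  shows "ent (map_pmf snd p) = ent (QYX p) + cond_ent (Y_QYX p)"
proof -
  have "ent (Y_QYX p) = ent (map_pmf (\<lambda>y. (y, condX p y)) (map_pmf snd p))"
    by (simp add: Y_QYX_def pmf.map_comp comp_def case_prod_unfold)
  also have "\<dots> = ent (map_pmf snd p)"
    using fin by (intro ent_map_pmf_inj) (auto simp: inj_on_def)
  finally show ?thesis
    by (simp add: cond_ent_def Y_QYX_def QYX_def pmf.map_comp comp_def case_prod_unfold)
qed

lemma tilde_CW_eq_ent_QYX:
  assumes "finite (set_pmf p)"
  shows "tilde_CW p = ent (QYX p)"
  unfolding tilde_CW_def
proof (rule cInf_eq_minimum)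
  obtain r where "r \<in> couplings p" "markov (XQY r)" "markov r"
    "ent (map_pmf (\<lambda>(x,y,q). q) r) = ent (QYX p)"
    using exists_coupling_through_QYX[OF assms] by metis
  then show "ent (QYX p) \<in> {ent (map_pmf (\<lambda>(x,y,q). q) r) | r.
      r \<in> couplings p \<and> markov (XQY r) \<and> markov r}"
    by force
qed (blast intro: ent_QYX_le)

lemma tilde_PW_eq_cond_ent_Y_QYX:
  assumes "finite (set_pmf p)"
  shows "tilde_PW p = cond_ent (Y_QYX p)"
  unfolding tilde_PW_def
proof (rule cSup_eq_maximum)
  obtain r where "r \<in> couplings p" "markov (XQY r)" "markov r"
    "cond_ent (map_pmf (\<lambda>(x,y,q). (y,q)) r) = cond_ent (Y_QYX p)"
    using exists_coupling_through_QYX[OF assms] by metis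
  then show "cond_ent (Y_QYX p) \<in> {cond_ent (map_pmf (\<lambda>(x,y,q). (y,q)) r) | r.
      r \<in> couplings p \<and> markov (XQY r) \<and> markov r}"
    by force
qed (blast intro: cond_ent_le_Y_QYX)

lemma wyner_CW_le_ent_QYX:
  assumes "finite (set_pmf p)"
  shows "wyner_CW p \<le> ent (QYX p)"
  unfolding wyner_CW_def
proof (rule cInf_lower)
  obtain r where "r \<in> couplings p" "markov (XQY r)"
    "mut_info (map_pmf (\<lambda>(x,y,q). ((x,y),q)) r) = ent (QYX p)"
    using exists_coupling_through_QYX[OF assms] by metis
  then show "ent (QYX p) \<in> {mut_info (map_pmf (\<lambda>(x,y,q). ((x,y),q)) r) | r.
      r \<in> couplings p \<and> markov (XQY r)}"
    by force
  show "bdd_below {mut_info (map_pmf (\<lambda>(x,y,q). ((x,y),q)) r) | r.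
      r \<in> couplings p \<and> markov (XQY r)}"
    by (rule bdd_belowI[of _ 0]) (auto simp: couplings_def intro!: mut_info_nonneg)
qed

theorem theorem1:
  fixes p :: "('x \<times> 'y) pmf"
  assumes "finite (set_pmf p)"
  shows "tilde_CW p = ent (QYX p)
       \<and> tilde_PW p = cond_ent (Y_QYX p)
       \<and> (ent (map_pmf snd p) = tilde_CW p + tilde_PW p
          \<and> tilde_CW p + tilde_PW p = ent (QYX p) + cond_ent (Y_QYX p))
       \<and> wyner_CW p \<le> tilde_CW p"
  using tilde_CW_eq_ent_QYX[OF assms] tilde_PW_eq_cond_ent_Y_QYX[OF assms]
    ent_snd_eq_ent_QYX_add_cond_ent[OF assms] wyner_CW_le_ent_QYX[OF assms]
  by simp

end
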